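(* Let $N\ge1$, $p\ge2$, $w,g\in L^1_{loc}(\mathbb{R}^N)$ positive a.e. with $g^{-1}\in L^\infty(\mathbb{R}^N)$. Let $\delta=\gamma\ge1$ with $(\delta,p)$ in the class $P_a$. Let $u\in C^1(\mathbb{R}^N)$, $u>0$, be a stable weak solution of $\operatorname{div}(w|\nabla u|^{p-2}\nabla u)=g(x)(u^{-\delta}+u^{-\gamma})$ (i.e. $=2g(x)u^{-\delta}$) in $\mathbb{R}^N$. Then for every $\beta\in(0,s_p)$ there exists a constant $c>0$, depending on $\beta,p,\delta,m$ but not on $\psi$, such that for every $\psi\in C^1_c(\mathbb{R}^N)$ with $0\le\psi\le1$, $$\int_{\mathbb{R}^N} g\Big(\frac{\psi}{u}\Big)^{2\beta+p-1+\delta}dx\le c\int_{\mathbb{R}^N} w^{\theta_a'}|\nabla\psi|^{p\theta_a'}dx,\qquad \theta_a'=\frac{2\beta+p-1+\delta}{p-1+\delta}.$$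
   Context: Here $m=\|g^{-1}\|_{L^\infty}$. Weak solution and stability are with respect to $f(t)=-t^{-\delta}-t^{-\gamma}$ and the equation $-\operatorname{div}(w|\nabla u|^{p-2}\nabla u)=gf(u)$: $u\in C^1$ is a weak solution if $\int w|\nabla u|^{p-2}\nabla u\cdot\nabla\varphi=\int gf(u)\varphi$ for all $\varphi\in C^1_c(\mathbb{R}^N)$; it is stable if for all $\varphi\in C^1_c(\mathbb{R}^N)$, $\int w|\nabla u|^{p-2}|\nabla\varphi|^2+(p-2)\int w|\nabla u|^{p-4}(\nabla u\cdot\nabla\varphi)^2-\int gf'(u)\varphi^2\ge0$ (middle integrand $=0$ where $\nabla u=0$). Class $P_a$: $(\delta,p)\in P_a$ if either $2\le p<3$ and $\delta\ge1$, or $p=3$ and $\delta>1$, or $p>3$ and $\delta>\frac{(p-1)^2}{4}$. $s_p=\delta+\sqrt{\delta^2+\delta}$ if $p=2$, $s_p=\frac{2\delta}{p-1}-\frac{p-1}{2}$ if $p>2$. *)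

theory Defs
  imports "HOL-Analysis.Analysis"
begin

definition grad :: "('a::euclidean_space \<Rightarrow> real) \<Rightarrow> 'a \<Rightarrow> 'a" where
  "grad u x = (\<Sum>b\<in>Basis. frechet_derivative u (at x) b *\<^sub>R b)"

definition C1 :: "('a::euclidean_space \<Rightarrow> real) \<Rightarrow> bool" where
  "C1 u \<longleftrightarrow> (\<forall>x. u differentiable (at x)) \<and> continuous_on UNIV (grad u)"

definition C1c :: "('a::euclidean_space \<Rightarrow> real) \<Rightarrow> bool" where
  "C1c u \<longleftrightarrow> C1 u \<and> compact (closure {x. u x \<noteq> 0})"

definition L1loc :: "('a::euclidean_space \<Rightarrow> real) \<Rightarrow> bool" where
  "L1loc f \<longleftrightarrow> (\<forall>K. compact K \<longrightarrow> set_integrable lebesgue K f)"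

definition Linf :: "('a::euclidean_space \<Rightarrow> real) \<Rightarrow> bool" where
  "Linf f \<longleftrightarrow> f \<in> borel_measurable lebesgue \<and> (\<exists>M. AE x in lebesgue. \<bar>f x\<bar> \<le> M)"

definition Linf_norm :: "('a::euclidean_space \<Rightarrow> real) \<Rightarrow> real" where
  "Linf_norm f = Inf {M. 0 \<le> M \<and> (AE x in lebesgue. \<bar>f x\<bar> \<le> M)}"

text \<open>Power t^a for t \<ge> 0 with the convention t^0 = 1 (Isabelle's powr has 0 powr 0 = 0).\<close>
definition npow :: "real \<Rightarrow> real \<Rightarrow> real" where
  "npow t a = (if a = 0 then 1 else t powr a)"

definition fnl :: "real \<Rightarrow> real \<Rightarrow> real \<Rightarrow> real" where
  "fnl \<delta> \<gamma> t = - (t powr (-\<delta>)) - t powr (-\<gamma>)"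

definition fnl' :: "real \<Rightarrow> real \<Rightarrow> real \<Rightarrow> real" where
  "fnl' \<delta> \<gamma> t = \<delta> * t powr (-\<delta> - 1) + \<gamma> * t powr (-\<gamma> - 1)"

text \<open>Weak solution of -div(w |grad u|^{p-2} grad u) = g f(u).\<close>
definition weak_solution ::
  "real \<Rightarrow> real \<Rightarrow> real \<Rightarrow> ('a::euclidean_space \<Rightarrow> real) \<Rightarrow> ('a \<Rightarrow> real) \<Rightarrow> ('a \<Rightarrow> real) \<Rightarrow> bool" where
  "weak_solution p \<delta> \<gamma> w g u \<longleftrightarrow> C1 u \<and>
     (\<forall>\<phi>. C1c \<phi> \<longrightarrow>
        (\<integral>x. w x * npow (norm (grad u x)) (p - 2) * (grad u x \<bullet> grad \<phi> x) \<partial>lebesgue)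
        = (\<integral>x. g x * fnl \<delta> \<gamma> (u x) * \<phi> x \<partial>lebesgue))"

definition stable ::
  "real \<Rightarrow> real \<Rightarrow> real \<Rightarrow> ('a::euclidean_space \<Rightarrow> real) \<Rightarrow> ('a \<Rightarrow> real) \<Rightarrow> ('a \<Rightarrow> real) \<Rightarrow> bool" where
  "stable p \<delta> \<gamma> w g u \<longleftrightarrow>
     (\<forall>\<phi>. C1c \<phi> \<longrightarrow>
        (\<integral>x. w x * npow (norm (grad u x)) (p - 2) * (norm (grad \<phi> x))\<^sup>2 \<partial>lebesgue)
        + (p - 2) * (\<integral>x. (if grad u x = 0 then 0
               else w x * norm (grad u x) powr (p - 4) * (grad u x \<bullet> grad \<phi> x)\<^sup>2) \<partial>lebesgue)
        - (\<integral>x. g x * fnl' \<delta> \<gamma> (u x) * (\<phi> x)\<^sup>2 \<partial>lebesgue) \<ge> 0)"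

definition class_Pa :: "real \<Rightarrow> real \<Rightarrow> bool" where
  "class_Pa \<delta> p \<longleftrightarrow> (2 \<le> p \<and> p < 3 \<and> \<delta> \<ge> 1) \<or> (p = 3 \<and> \<delta> > 1)
      \<or> (p > 3 \<and> \<delta> > (p - 1)\<^sup>2 / 4)"

definition s_p :: "real \<Rightarrow> real \<Rightarrow> real" where
  "s_p p \<delta> = (if p = 2 then \<delta> + sqrt (\<delta>\<^sup>2 + \<delta>) else 2 * \<delta> / (p - 1) - (p - 1) / 2)"

end

theory Submission
  imports Defs
begin

text \<open>Put $\alpha = \beta + (p-2)/2$ and $q = 2\beta + p - 1 + \delta$. Test the stability
  inequality with $\varphi = u^{-\alpha}\psi^{q/2}$ and the weak formulation with
  $\eta = u^{-(2\alpha+1)}\psi^q$, and add $(p-1)$ times the first to $\mu$ times the second,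
  where $\mu$ is the mean of $(p-1)\alpha^2/(2\alpha+1)$ and $\delta$. With
  $\kappa = \delta(2\alpha+1) - (p-1)\alpha^2$, which is positive since $\beta < s_p$, the
  zero-order terms add up to $-\frac{\kappa}{2\alpha+1}\, g\,(\psi/u)^q$ and the
  $|\nabla u|^2$ terms to $-\frac{\kappa}{2} w |\nabla u|^p u^{-2\alpha-2}\psi^q$. Young's
  inequality absorbs the remaining terms, which carry $\nabla\psi$, into these two negative terms
  while keeping half of the zero-order term, up to $C\, w^{\theta}|\nabla\psi|^{p\theta}$;
  here $g^{-1} \le m$ and $\psi \le 1$ are used.\<close>

section \<open>Gradients of $C^1$ functions and the test functions\<close>

lemma has_derivative_grad:
  fixes f :: "'a::euclidean_space \<Rightarrow> real"
  assumes "f differentiable (at x)"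
  shows "(f has_derivative (\<lambda>h. grad f x \<bullet> h)) (at x)"
proof -
  let ?D = "frechet_derivative f (at x)"
  have D: "(f has_derivative ?D) (at x)"
    using assms frechet_derivative_works by blast
  then have lin: "linear ?D"
    using has_derivative_linear by blast
  have "?D = (\<lambda>h. grad f x \<bullet> h)"
  proof
    fix h
    have "?D h = ?D (\<Sum>b\<in>Basis. (h \<bullet> b) *\<^sub>R b)"
      by (simp add: euclidean_representation)
    also have "\<dots> = (\<Sum>b\<in>Basis. (h \<bullet> b) * ?D b)"
      using lin by (simp add: linear_sum linear_scale)
    also have "\<dots> = grad f x \<bullet> h"
      unfolding grad_def inner_sum_left by (simp add: inner_commute[of h] mult.commute)
    finally show "?D h = grad f x \<bullet> h" .
  qed
  with D show ?thesis
    by simp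
qed

lemma grad_unique:
  fixes f :: "'a::euclidean_space \<Rightarrow> real"
  assumes "(f has_derivative (\<lambda>h. G \<bullet> h)) (at x)"
  shows "grad f x = G"
proof -
  have "frechet_derivative f (at x) = (\<lambda>h. G \<bullet> h)"
    using frechet_derivative_at[OF assms] by simp
  moreover have "(\<Sum>b\<in>Basis. (G \<bullet> b) *\<^sub>R b) = G"
    by (rule euclidean_representation)
  ultimately show ?thesis
    unfolding grad_def by simp
qed

lemma notin_closure_support: "x \<notin> closure {x. f x \<noteq> 0} \<Longrightarrow> f x = 0"
  by (metis (mono_tags) closure_subset mem_Collect_eq subsetD)

lemma grad_eq_0_outside_support:
  fixes f :: "'a::euclidean_space \<Rightarrow> real"
  assumes "x \<notin> closure {x. f x \<noteq> 0}"
  shows "grad f x = 0"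
proof (rule grad_unique)
  have "((\<lambda>_. 0) has_derivative (\<lambda>h. 0 \<bullet> h)) (at x)"
    by simp
  then show "(f has_derivative (\<lambda>h. 0 \<bullet> h)) (at x)"
    by (rule has_derivative_transform_within_open[where s = "- closure {x. f x \<noteq> 0}"])
      (use assms notin_closure_support in auto)
qed

lemma has_real_derivative_powr_nonneg:
  fixes k t :: real
  assumes "1 < k" and "0 \<le> t"
  shows "((\<lambda>t. t powr k) has_real_derivative k * t powr (k - 1)) (at t)"
proof (cases "t = 0")
  case True
  have "((\<lambda>y. (y powr k - 0 powr k) / (y - 0)) \<longlongrightarrow> 0) (at 0)"
  proof (rule tendsto_norm_zero_cancel)
    have "((\<lambda>y. \<bar>y\<bar> powr (k - 1)) \<longlongrightarrow> 0 powr (k - 1)) (at (0::real))"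
    proof (rule tendsto_powr')
      show "((\<lambda>y. \<bar>y\<bar>) \<longlongrightarrow> 0) (at (0::real))"
        using tendsto_rabs[OF tendsto_ident_at[of "0::real" UNIV]] by simp
    qed (use assms in auto)
    then have lim: "((\<lambda>y. \<bar>y\<bar> powr (k - 1)) \<longlongrightarrow> 0) (at (0::real))"
      by simp
    have "y powr k / \<bar>y\<bar> = \<bar>y\<bar> powr (k - 1)" if "y \<noteq> 0" for y :: real
    proof -
      have "y powr k = \<bar>y\<bar> powr k"
        by (simp add: abs_if uminus_powr_eq)
      also have "\<dots> = \<bar>y\<bar> powr (k - 1) * \<bar>y\<bar>"
        by (metis abs_abs diff_add_cancel powr_add powr_one')
      finally show ?thesis
        using that by simp
    qed
    then have ev: "\<forall>\<^sub>F y in at (0::real). norm ((y powr k - 0 powr k) / (y - 0)) = \<bar>y\<bar> powr (k - 1)"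
      unfolding eventually_at_filter by (intro always_eventually) auto
    show "((\<lambda>y. norm ((y powr k - 0 powr k) / (y - 0))) \<longlongrightarrow> 0) (at 0)"
      by (rule iffD2[OF tendsto_cong[OF ev] lim])
  qed
  then show ?thesis
    using True by (simp add: has_field_derivative_iff)
next
  case False
  then show ?thesis
    using has_real_derivative_powr[of t k] assms by simp
qed

lemma C1_has_derivative: "C1 u \<Longrightarrow> (u has_derivative (\<lambda>h. grad u x \<bullet> h)) (at x)"
  unfolding C1_def by (simp add: has_derivative_grad)

lemma C1_continuous_on: "C1 u \<Longrightarrow> continuous_on UNIV u"
  unfolding C1_def
  by (meson differentiable_at_imp_differentiable_on differentiable_imp_continuous_on)

lemma C1_continuous_on_grad: "C1 u \<Longrightarrow> continuous_on UNIV (grad u)"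
  unfolding C1_def by simp

lemma C1c_C1: "C1c u \<Longrightarrow> C1 u"
  unfolding C1c_def by simp

lemma has_derivative_powr_mult_powr:
  fixes u \<psi> :: "'a::euclidean_space \<Rightarrow> real"
  assumes "C1 u" "\<forall>x. 0 < u x" "C1 \<psi>" "\<forall>x. 0 \<le> \<psi> x" "1 < k"
  shows "((\<lambda>x. u x powr (-a) * \<psi> x powr k) has_derivative
      (\<lambda>h. ((-a * u x powr (-a - 1) * \<psi> x powr k) *\<^sub>R grad u x
             + (u x powr (-a) * (k * \<psi> x powr (k - 1))) *\<^sub>R grad \<psi> x) \<bullet> h)) (at x)"
proof -
  have du: "((\<lambda>x. u x powr (-a)) has_derivative (\<lambda>h. (-a * u x powr (-a - 1)) * (grad u x \<bullet> h))) (at x)"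
    using DERIV_compose_FDERIV[OF has_real_derivative_powr[of "u x" "-a"] C1_has_derivative[OF assms(1)]]
      assms(2) by (simp add: mult_ac)
  have d\<psi>: "((\<lambda>x. \<psi> x powr k) has_derivative (\<lambda>h. (k * \<psi> x powr (k - 1)) * (grad \<psi> x \<bullet> h))) (at x)"
    using DERIV_compose_FDERIV[OF has_real_derivative_powr_nonneg C1_has_derivative[OF assms(3)]]
      assms(4,5) by (simp add: mult_ac)
  show ?thesis
    by (rule has_derivative_eq_rhs[OF has_derivative_mult[OF du d\<psi>]])
      (auto simp: inner_add_left algebra_simps)
qed

corollary grad_powr_mult_powr:
  fixes u \<psi> :: "'a::euclidean_space \<Rightarrow> real"
  assumes "C1 u" "\<forall>x. 0 < u x" "C1 \<psi>" "\<forall>x. 0 \<le> \<psi> x" "1 < k"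
  shows "grad (\<lambda>x. u x powr (-a) * \<psi> x powr k) x =
      (-a * u x powr (-a - 1) * \<psi> x powr k) *\<^sub>R grad u x
      + (u x powr (-a) * (k * \<psi> x powr (k - 1))) *\<^sub>R grad \<psi> x"
  by (rule grad_unique[OF has_derivative_powr_mult_powr[OF assms]])

lemma C1c_powr_mult_powr:
  fixes u \<psi> :: "'a::euclidean_space \<Rightarrow> real"
  assumes u: "C1 u" "\<forall>x. 0 < u x" and \<psi>: "C1c \<psi>" "\<forall>x. 0 \<le> \<psi> x" and k: "1 < k"
  shows "C1c (\<lambda>x. u x powr (-a) * \<psi> x powr k)"
proof -
  note \<psi>C1 = C1c_C1[OF \<psi>(1)]
  note cont = C1_continuous_on[OF u(1)] C1_continuous_on[OF \<psi>C1]
    C1_continuous_on_grad[OF u(1)] C1_continuous_on_grad[OF \<psi>C1]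
  have "continuous_on UNIV (\<lambda>x. (-a * u x powr (-a - 1) * \<psi> x powr k) *\<^sub>R grad u x
      + (u x powr (-a) * (k * \<psi> x powr (k - 1))) *\<^sub>R grad \<psi> x)"
    using u(2) \<psi>(2) k
    by (intro continuous_intros continuous_on_powr' cont) (auto simp: less_imp_neq[symmetric])
  then have "C1 (\<lambda>x. u x powr (-a) * \<psi> x powr k)"
    unfolding C1_def grad_powr_mult_powr[OF u \<psi>C1 \<psi>(2) k]
    using has_derivative_powr_mult_powr[OF u \<psi>C1 \<psi>(2) k] differentiableI by blast
  moreover have "closure {x. u x powr (-a) * \<psi> x powr k \<noteq> 0} \<subseteq> closure {x. \<psi> x \<noteq> 0}"
    by (rule closure_mono) auto
  ultimately show ?thesis
    using \<psi>(1) compact_Int_closed[of "closure {x. \<psi> x \<noteq> 0}" "closure {x. u x powr (-a) * \<psi> x powr k \<noteq> 0}"]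
    unfolding C1c_def by (simp add: Int_absorb1)
qed

section \<open>Local integrability\<close>

lemma continuous_on_borel_measurable_lebesgue:
  fixes f :: "'a::euclidean_space \<Rightarrow> 'b::euclidean_space"
  assumes "continuous_on UNIV f"
  shows "f \<in> borel_measurable lebesgue"
  by (metis measurable_completion borel_measurable_continuous_onI assms measurable_lborel2)

lemma L1loc_borel_measurable:
  fixes w :: "'a::euclidean_space \<Rightarrow> real"
  assumes "L1loc w"
  shows "w \<in> borel_measurable lebesgue"
proof (rule borel_measurable_LIMSEQ_real)
  fix n :: nat
  have "set_integrable lebesgue (cball 0 (real n)) w"
    using assms unfolding L1loc_def by simp
  then show "(\<lambda>x. indicator (cball 0 (real n)) x *\<^sub>R w x) \<in> borel_measurable lebesgue"
    unfolding set_integrable_def by (rule borel_measurable_integrable)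
next
  fix x :: 'a
  obtain N :: nat where N: "norm x \<le> real N"
    using real_arch_simple by blast
  have "\<forall>\<^sub>F n in sequentially. indicator (cball 0 (real n)) x *\<^sub>R w x = w x"
  proof (rule eventually_sequentiallyI[of N])
    fix n assume "N \<le> n"
    then have "x \<in> cball 0 (real n)"
      using N by (simp add: dist_norm)
    then show "indicator (cball 0 (real n)) x *\<^sub>R w x = w x"
      by simp
  qed
  then show "(\<lambda>n. indicator (cball 0 (real n)) x *\<^sub>R w x) \<longlonglongrightarrow> w x"
    by (rule tendsto_eventually)
qed

lemma L1loc_integrable_mult:
  fixes w h :: "'a::euclidean_space \<Rightarrow> real"
  assumes w: "L1loc w" and K: "compact K" and h: "continuous_on UNIV h" "\<And>x. x \<notin> K \<Longrightarrow> h x = 0"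
  shows "integrable lebesgue (\<lambda>x. w x * h x)"
proof -
  have "bounded (h ` K)"
    using K h(1) by (meson compact_continuous_image compact_imp_bounded continuous_on_subset subset_UNIV)
  then obtain B where "0 < B" "\<forall>y\<in>h ` K. norm y \<le> B"
    using bounded_pos by blast
  then have B: "0 < B" "\<And>x. x \<in> K \<Longrightarrow> \<bar>h x\<bar> \<le> B"
    by auto
  have "set_integrable lebesgue K w"
    using w K unfolding L1loc_def by simp
  then have "integrable lebesgue (\<lambda>x. B * (indicator K x *\<^sub>R w x))"
    unfolding set_integrable_def by simp
  then show ?thesis
  proof (rule Bochner_Integration.integrable_bound)
    show "(\<lambda>x. w x * h x) \<in> borel_measurable lebesgue"
      using L1loc_borel_measurable[OF w] continuous_on_borel_measurable_lebesgue[OF h(1)]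
      by measurable
    have "\<bar>h x\<bar> * \<bar>w x\<bar> \<le> B * (indicator K x * \<bar>w x\<bar>)" for x
      using B(2)[of x] h(2)[of x] by (cases "x \<in> K") (simp_all add: mult_right_mono)
    then show "AE x in lebesgue. norm (w x * h x) \<le> norm (B * (indicator K x *\<^sub>R w x))"
      using B(1) by (simp add: abs_mult mult.commute)
  qed
qed

section \<open>Testing the equation and the stability inequality\<close>

lemma npow_nonneg: "0 \<le> npow x a"
  unfolding npow_def by simp

lemma continuous_on_npow:
  fixes f :: "'a::topological_space \<Rightarrow> real"
  assumes "continuous_on S f" "\<And>x. x \<in> S \<Longrightarrow> 0 \<le> f x" "0 \<le> a"
  shows "continuous_on S (\<lambda>x. npow (f x) a)"
proof (cases "a = 0")
  case True
  then show ?thesis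
    by (simp add: npow_def)
next
  case False
  then show ?thesis
    unfolding npow_def using assms by (auto intro!: continuous_on_powr')
qed

lemma stability_cross_term_le:
  fixes A V :: "'a::euclidean_space"
  assumes "0 \<le> W"
  shows "(if A = 0 then 0 else W * norm A powr (p - 4) * (A \<bullet> V)\<^sup>2)
    \<le> W * npow (norm A) (p - 2) * (norm V)\<^sup>2"
proof (cases "A = 0")
  case True
  then show ?thesis
    using assms by (simp add: npow_nonneg)
next
  case False
  then have A: "0 < norm A"
    by simp
  have "npow (norm A) (p - 2) = norm A powr ((p - 4) + 2)"
    using A by (simp add: npow_def)
  also have "\<dots> = norm A powr (p - 4) * norm A powr 2"
    by (rule powr_add)
  also have "norm A powr 2 = (norm A)\<^sup>2"
    using A by simp
  finally have e: "norm A powr (p - 4) * (norm A)\<^sup>2 = npow (norm A) (p - 2)" ..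
  have "(A \<bullet> V)\<^sup>2 \<le> (norm A)\<^sup>2 * (norm V)\<^sup>2"
    by (metis Cauchy_Schwarz_ineq power2_norm_eq_inner)
  then have "W * norm A powr (p - 4) * (A \<bullet> V)\<^sup>2 \<le> W * norm A powr (p - 4) * ((norm A)\<^sup>2 * (norm V)\<^sup>2)"
    using assms by (intro mult_left_mono) auto
  also have "\<dots> = W * npow (norm A) (p - 2) * (norm V)\<^sup>2"
    using e by (simp add: mult_ac)
  finally show ?thesis
    using False by simp
qed

lemma combination_integrands_integrable:
  fixes w g u \<phi> \<eta> :: "'a::euclidean_space \<Rightarrow> real" and p \<delta> \<gamma> :: real
  assumes p: "2 \<le> p" and w: "L1loc w" and g: "L1loc g" and u: "C1 u" "\<forall>x. 0 < u x"
    and \<phi>: "C1c \<phi>" and \<eta>: "C1c \<eta>"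
  shows "integrable lebesgue (\<lambda>x. w x * (npow (norm (grad u x)) (p - 2) * (norm (grad \<phi> x))\<^sup>2))"
    and "integrable lebesgue (\<lambda>x. g x * (fnl' \<delta> \<gamma> (u x) * (\<phi> x)\<^sup>2))"
    and "integrable lebesgue (\<lambda>x. w x * (npow (norm (grad u x)) (p - 2) * (grad u x \<bullet> grad \<eta> x)))"
    and "integrable lebesgue (\<lambda>x. g x * (fnl \<delta> \<gamma> (u x) * \<eta> x))"
proof -
  have N: "continuous_on UNIV (\<lambda>x. npow (norm (grad u x)) (p - 2))"
    using p by (intro continuous_on_npow continuous_intros C1_continuous_on_grad u(1)) auto
  have u0: "\<forall>x\<in>UNIV. u x \<noteq> 0"
    using u(2) by (simp add: less_imp_neq[symmetric])
  have K\<phi>: "compact (closure {x. \<phi> x \<noteq> 0})" and K\<eta>: "compact (closure {x. \<eta> x \<noteq> 0})"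
    using \<phi> \<eta> unfolding C1c_def by simp_all
  note cont = N C1_continuous_on[OF u(1)] C1_continuous_on_grad[OF u(1)]
    C1_continuous_on[OF C1c_C1[OF \<phi>]] C1_continuous_on_grad[OF C1c_C1[OF \<phi>]]
    C1_continuous_on[OF C1c_C1[OF \<eta>]] C1_continuous_on_grad[OF C1c_C1[OF \<eta>]]
  show "integrable lebesgue (\<lambda>x. w x * (npow (norm (grad u x)) (p - 2) * (norm (grad \<phi> x))\<^sup>2))"
  proof (rule L1loc_integrable_mult[OF w K\<phi>])
    show "continuous_on UNIV (\<lambda>x. npow (norm (grad u x)) (p - 2) * (norm (grad \<phi> x))\<^sup>2)"
      by (intro continuous_intros cont)
  qed (simp add: grad_eq_0_outside_support)
  show "integrable lebesgue (\<lambda>x. g x * (fnl' \<delta> \<gamma> (u x) * (\<phi> x)\<^sup>2))"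
  proof (rule L1loc_integrable_mult[OF g K\<phi>])
    show "continuous_on UNIV (\<lambda>x. fnl' \<delta> \<gamma> (u x) * (\<phi> x)\<^sup>2)"
      unfolding fnl'_def using u0 by (intro continuous_intros cont) auto
  qed (auto dest: notin_closure_support)
  show "integrable lebesgue (\<lambda>x. w x * (npow (norm (grad u x)) (p - 2) * (grad u x \<bullet> grad \<eta> x)))"
  proof (rule L1loc_integrable_mult[OF w K\<eta>])
    show "continuous_on UNIV (\<lambda>x. npow (norm (grad u x)) (p - 2) * (grad u x \<bullet> grad \<eta> x))"
      by (intro continuous_intros cont)
  qed (simp add: grad_eq_0_outside_support)
  show "integrable lebesgue (\<lambda>x. g x * (fnl \<delta> \<gamma> (u x) * \<eta> x))"
  proof (rule L1loc_integrable_mult[OF g K\<eta>])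
    show "continuous_on UNIV (\<lambda>x. fnl \<delta> \<gamma> (u x) * \<eta> x)"
      unfolding fnl_def using u0 by (intro continuous_intros cont) auto
  qed (auto dest: notin_closure_support)
qed

lemma stable_weak_solution_combination:
  fixes w g u \<phi> \<eta> :: "'a::euclidean_space \<Rightarrow> real" and p \<delta> \<gamma> \<mu> :: real
  assumes p: "2 \<le> p" and w: "L1loc w" "AE x in lebesgue. 0 \<le> w x" and g: "L1loc g"
    and u: "C1 u" "\<forall>x. 0 < u x"
    and weak: "weak_solution p \<delta> \<gamma> w g u" and stab: "stable p \<delta> \<gamma> w g u"
    and \<phi>: "C1c \<phi>" and \<eta>: "C1c \<eta>"
  defines "E \<equiv> \<lambda>x. (p - 1) * (w x * npow (norm (grad u x)) (p - 2) * (norm (grad \<phi> x))\<^sup>2)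
      - g x * fnl' \<delta> \<gamma> (u x) * (\<phi> x)\<^sup>2
      + \<mu> * (w x * npow (norm (grad u x)) (p - 2) * (grad u x \<bullet> grad \<eta> x)
             - g x * fnl \<delta> \<gamma> (u x) * \<eta> x)"
  shows "integrable lebesgue E" and "0 \<le> integral\<^sup>L lebesgue E"
proof -
  define N where "N x = npow (norm (grad u x)) (p - 2)" for x
  note integrable = combination_integrands_integrable[OF p w(1) g u \<phi> \<eta>, folded N_def]
  define t1 where "t1 = (\<integral>x. w x * N x * (norm (grad \<phi> x))\<^sup>2 \<partial>lebesgue)"
  define t2 where "t2 = (\<integral>x. (if grad u x = 0 then 0
      else w x * norm (grad u x) powr (p - 4) * (grad u x \<bullet> grad \<phi> x)\<^sup>2) \<partial>lebesgue)"
  define t3 where "t3 = (\<integral>x. g x * fnl' \<delta> \<gamma> (u x) * (\<phi> x)\<^sup>2 \<partial>lebesgue)"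
  have "0 \<le> t1 + (p - 2) * t2 - t3"
    using stab \<phi> unfolding stable_def t1_def t2_def t3_def N_def by blast
  \<comment> \<open>Cauchy--Schwarz; since \<open>p \<ge> 2\<close>, stability then gives \<open>t3 \<le> (p - 1) * t1\<close>.\<close>
  moreover have "t2 \<le> t1"
    unfolding t1_def t2_def
  proof (rule integral_mono_AE'[OF integrable(1)[unfolded mult.assoc[symmetric]]])
    show "AE x in lebesgue. (if grad u x = 0 then 0
        else w x * norm (grad u x) powr (p - 4) * (grad u x \<bullet> grad \<phi> x)\<^sup>2)
      \<le> w x * N x * (norm (grad \<phi> x))\<^sup>2"
      using w(2) unfolding N_def by (rule eventually_mono) (rule stability_cross_term_le)
    show "AE x in lebesgue. 0 \<le> w x * N x * (norm (grad \<phi> x))\<^sup>2"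
      using w(2) unfolding N_def by (rule eventually_mono) (simp add: npow_nonneg)
  qed
  then have "(p - 2) * t2 \<le> (p - 2) * t1"
    using p by (intro mult_left_mono) auto
  moreover have "(p - 1) * t1 - t3 = t1 + (p - 2) * t1 - t3"
    by (simp add: algebra_simps)
  ultimately have "0 \<le> (p - 1) * t1 - t3"
    by linarith
  moreover have "(\<integral>x. w x * N x * (grad u x \<bullet> grad \<eta> x) \<partial>lebesgue) = (\<integral>x. g x * fnl \<delta> \<gamma> (u x) * \<eta> x \<partial>lebesgue)"
    using weak \<eta> unfolding weak_solution_def N_def by blast
  moreover have "integral\<^sup>L lebesgue E = (p - 1) * t1 - t3
      + \<mu> * ((\<integral>x. w x * N x * (grad u x \<bullet> grad \<eta> x) \<partial>lebesgue) - (\<integral>x. g x * fnl \<delta> \<gamma> (u x) * \<eta> x \<partial>lebesgue))"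
    unfolding E_def t1_def t3_def N_def[symmetric] using integrable by (simp add: mult.assoc)
  ultimately show "0 \<le> integral\<^sup>L lebesgue E"
    by simp
  show "integrable lebesgue E"
    unfolding E_def N_def[symmetric] using integrable by (simp add: mult.assoc)
qed

lemma ennreal_integral_le_nn_integral:
  fixes f :: "'a \<Rightarrow> real"
  assumes "integrable M f"
  shows "ennreal (integral\<^sup>L M f) \<le> (\<integral>\<^sup>+x. ennreal (f x) \<partial>M)"
proof -
  have "integral\<^sup>L M f \<le> integral\<^sup>L M (\<lambda>x. max (f x) 0)"
    using assms by (intro integral_mono) auto
  moreover have "(\<integral>\<^sup>+x. ennreal (max (f x) 0) \<partial>M) = ennreal (integral\<^sup>L M (\<lambda>x. max (f x) 0))"
    using assms by (intro nn_integral_eq_integral) auto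
  moreover have "(\<lambda>x. ennreal (max (f x) 0)) = (\<lambda>x. ennreal (f x))"
    by (auto simp: max_def ennreal_neg)
  ultimately show ?thesis
    by (metis ennreal_leI)
qed

lemma nn_integral_le_by_absorption:
  fixes E J r :: "'a \<Rightarrow> real"
  assumes E: "integrable M E" "0 \<le> integral\<^sup>L M E" and J: "integrable M J" "AE x in M. 0 \<le> J x"
    and r: "r \<in> borel_measurable M" "\<And>x. 0 \<le> r x" and \<epsilon>: "0 < \<epsilon>" and C: "0 \<le> C"
    and bound: "AE x in M. E x + \<epsilon> * J x \<le> C * r x"
  shows "(\<integral>\<^sup>+x. J x \<partial>M) \<le> ennreal (C / \<epsilon>) * (\<integral>\<^sup>+x. r x \<partial>M)"
proof -
  have "ennreal \<epsilon> * (\<integral>\<^sup>+x. J x \<partial>M) = ennreal (\<epsilon> * integral\<^sup>L M J)"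
    using nn_integral_eq_integral[OF J] integral_nonneg_AE[OF J(2)] \<epsilon> by (simp add: ennreal_mult)
  also have "\<dots> \<le> ennreal (integral\<^sup>L M (\<lambda>x. E x + \<epsilon> * J x))"
    using E J by (intro ennreal_leI) simp
  also have "\<dots> \<le> (\<integral>\<^sup>+x. E x + \<epsilon> * J x \<partial>M)"
    using E J by (intro ennreal_integral_le_nn_integral) auto
  also have "\<dots> \<le> (\<integral>\<^sup>+x. ennreal C * r x \<partial>M)"
    using bound by (intro nn_integral_mono_AE) (auto elim!: AE_mp simp: C r(2) ennreal_mult[symmetric] ennreal_leI)
  also have "\<dots> = ennreal C * (\<integral>\<^sup>+x. r x \<partial>M)"
    using r(1) by (intro nn_integral_cmult) simp
  finally have "ennreal (1 / \<epsilon>) * (ennreal \<epsilon> * (\<integral>\<^sup>+x. J x \<partial>M))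
      \<le> ennreal (1 / \<epsilon>) * (ennreal C * (\<integral>\<^sup>+x. r x \<partial>M))"
    by (rule mult_left_mono) simp
  then show ?thesis
    using \<epsilon> C by (simp add: ennreal_mult[symmetric] mult.assoc[symmetric])
qed

lemma Linf_AE_bound:
  fixes f :: "'a::euclidean_space \<Rightarrow> real"
  assumes "Linf f"
  shows "AE x in lebesgue. \<bar>f x\<bar> \<le> \<bar>Linf_norm f\<bar> + 1"
proof -
  define S where "S = {M. 0 \<le> M \<and> (AE x in lebesgue. \<bar>f x\<bar> \<le> M)}"
  obtain M where M: "AE x in lebesgue. \<bar>f x\<bar> \<le> M"
    using assms unfolding Linf_def by blast
  have "max M 0 \<in> S"
    unfolding S_def using M by (auto elim: AE_mp)
  then have "S \<noteq> {}"
    by blast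
  moreover have "bdd_below S"
    unfolding S_def by (rule bdd_belowI[of _ 0]) auto
  moreover have "Inf S < \<bar>Linf_norm f\<bar> + 1"
    unfolding Linf_norm_def S_def by simp
  ultimately obtain M' where "M' \<in> S" "M' < \<bar>Linf_norm f\<bar> + 1"
    using cInf_less_iff by blast
  then show ?thesis
    unfolding S_def by (auto elim: AE_mp)
qed

section \<open>Elementary inequalities\<close>

lemma Youngs_inequality_eps:
  fixes a \<epsilon> :: real
  assumes a: "0 < a" "a < 1" and \<epsilon>: "0 < \<epsilon>"
  obtains C where "0 \<le> C" "\<And>x y. 0 \<le> x \<Longrightarrow> 0 \<le> y \<Longrightarrow> x powr a * y powr (1 - a) \<le> \<epsilon> * x + C * y"
proof -
  define C where "C = (1 - a) * (a / \<epsilon>) powr (a / (1 - a))"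
  have C: "0 < C"
    unfolding C_def using a \<epsilon> by simp
  have "x powr a * y powr (1 - a) \<le> \<epsilon> * x + C * y" if x: "0 \<le> x" and y: "0 \<le> y" for x y
  proof (cases "x = 0 \<or> y = 0")
    case True
    then show ?thesis
      using a C x y \<epsilon> by auto
  next
    case False
    then have "0 < x" "0 < y"
      using x y by auto
    then have "((\<epsilon> / a) * x) powr a * ((C / (1 - a)) * y) powr (1 - a)
          \<le> a * ((\<epsilon> / a) * x) + (1 - a) * ((C / (1 - a)) * y)"
      using a \<epsilon> C by (intro Youngs_inequality_0) auto
    also have "\<dots> = \<epsilon> * x + C * y"
      using a by simp
    also have "((\<epsilon> / a) * x) powr a * ((C / (1 - a)) * y) powr (1 - a)
          = ((\<epsilon> / a) powr a * (C / (1 - a)) powr (1 - a)) * (x powr a * y powr (1 - a))"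
      unfolding powr_mult by (simp add: mult_ac)
    also have "(\<epsilon> / a) powr a * (C / (1 - a)) powr (1 - a) = 1"
    proof -
      have "(C / (1 - a)) powr (1 - a) = (a / \<epsilon>) powr a"
        unfolding C_def using a by (simp add: powr_powr)
      then show ?thesis
        using a \<epsilon> by (simp add: powr_divide)
    qed
    finally show ?thesis
      by simp
  qed
  with C show thesis
    using that by (meson less_imp_le)
qed

lemma absorb_cross_term:
  fixes D B A y X t :: real
  assumes "0 < D" "\<bar>t\<bar> \<le> y * X" "0 \<le> y" "0 \<le> X"
  shows "B * t + A * X\<^sup>2 - D / 2 * y\<^sup>2 \<le> (B\<^sup>2 / D + A) * X\<^sup>2 - D / 4 * y\<^sup>2"
proof -
  have "B * t \<le> \<bar>B\<bar> * \<bar>t\<bar>"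
    by (metis abs_ge_self abs_mult)
  also have "\<dots> \<le> \<bar>B\<bar> * (y * X)"
    using assms by (intro mult_left_mono) auto
  also have "\<dots> \<le> D / 4 * y\<^sup>2 + B\<^sup>2 / D * X\<^sup>2"
  proof -
    have "0 \<le> (D / 2 * y - \<bar>B\<bar> * X)\<^sup>2 / D"
      using assms by simp
    also have "\<dots> = D / 4 * y\<^sup>2 + B\<^sup>2 / D * X\<^sup>2 - \<bar>B\<bar> * (y * X)"
      using assms by (simp add: power2_eq_square field_simps)
    finally show ?thesis
      by simp
  qed
  finally show ?thesis
    by (simp add: algebra_simps)
qed

lemma npow_quadratic_le_powr:
  fixes p D A :: real
  assumes p: "2 \<le> p" and D: "0 < D" and A: "0 < A"
  obtains C where "0 \<le> C"
    "\<And>G X. 0 \<le> G \<Longrightarrow> 0 \<le> X \<Longrightarrow> npow G (p - 2) * (A * X\<^sup>2 - D * G\<^sup>2) \<le> C * X powr p"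
proof (cases "p = 2")
  case True
  have "npow G (p - 2) * (A * X\<^sup>2 - D * G\<^sup>2) \<le> A * X powr p" if "0 \<le> X" for G X
    using True that D by (simp add: npow_def powr_realpow' [of X 2, simplified])
  then show thesis
    using that A by (meson less_imp_le)
next
  case False
  then have p2: "2 < p"
    using p by simp
  have a: "0 < (p - 2) / p" "(p - 2) / p < 1"
    using p2 by auto
  obtain C where C: "0 \<le> C" and young: "\<And>x y. 0 \<le> x \<Longrightarrow> 0 \<le> y \<Longrightarrow>
      x powr ((p - 2) / p) * y powr (1 - (p - 2) / p) \<le> D / A * x + C * y"
    using Youngs_inequality_eps[OF a, of "D / A"] D A by auto
  have "npow G (p - 2) * (A * X\<^sup>2 - D * G\<^sup>2) \<le> (A * C) * X powr p"
    if G: "0 \<le> G" and X: "0 \<le> X" for G X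
  proof -
    have "(G powr p) powr ((p - 2) / p) = G powr (p - 2)"
      using p2 by (simp add: powr_powr)
    moreover have "(X powr p) powr (1 - (p - 2) / p) = X\<^sup>2"
    proof -
      have "(X powr p) powr (1 - (p - 2) / p) = X powr 2"
        using p2 by (simp add: powr_powr field_simps)
      then show ?thesis
        using X by (simp add: powr_realpow' [of X 2, simplified])
    qed
    ultimately have "G powr (p - 2) * X\<^sup>2 \<le> D / A * G powr p + C * X powr p"
      using young[of "G powr p" "X powr p"] by simp
    then have "A * (G powr (p - 2) * X\<^sup>2) \<le> A * (D / A * G powr p + C * X powr p)"
      using A by (intro mult_left_mono) auto
    also have "\<dots> = D * G powr p + (A * C) * X powr p"
      using A by (simp add: field_simps)
    finally have "A * (G powr (p - 2) * X\<^sup>2) \<le> D * G powr p + (A * C) * X powr p" .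
    moreover have "G powr (p - 2) * G\<^sup>2 = G powr p"
    proof (cases "G = 0")
      case True
      then show ?thesis
        using p2 by simp
    next
      case False
      then have "G powr (p - 2) * G\<^sup>2 = G powr (p - 2) * G powr 2"
        using G by (simp add: powr_realpow' [of G 2, simplified])
      also have "\<dots> = G powr (p - 2 + 2)"
        by (rule powr_add[symmetric])
      finally show ?thesis
        by simp
    qed
    ultimately show ?thesis
      using p2 by (simp add: npow_def algebra_simps)
  qed
  then show thesis
    using that A C by (meson mult_nonneg_nonneg less_imp_le)
qed

lemma npow_gradient_terms_le:
  fixes p D A B :: real
  assumes p: "2 \<le> p" and D: "0 < D" and A: "0 < A"
  obtains C where "0 \<le> C" "\<And>G X t. 0 \<le> G \<Longrightarrow> 0 \<le> X \<Longrightarrow> \<bar>t\<bar> \<le> G * X \<Longrightarrow>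
      npow G (p - 2) * (B * t + A * X\<^sup>2 - D * G\<^sup>2) \<le> C * X powr p"
proof -
  have "0 < B\<^sup>2 / (2 * D) + A"
    using D A by (simp add: add_nonneg_pos)
  then obtain C where C: "0 \<le> C" and absorb: "\<And>G X. 0 \<le> G \<Longrightarrow> 0 \<le> X \<Longrightarrow>
      npow G (p - 2) * ((B\<^sup>2 / (2 * D) + A) * X\<^sup>2 - D / 2 * G\<^sup>2) \<le> C * X powr p"
    using npow_quadratic_le_powr[OF p, of "D / 2"] D by (metis half_gt_zero)
  have "npow G (p - 2) * (B * t + A * X\<^sup>2 - D * G\<^sup>2) \<le> C * X powr p"
    if G: "0 \<le> G" and X: "0 \<le> X" and t: "\<bar>t\<bar> \<le> G * X" for G X t
  proof -
    have "B * t + A * X\<^sup>2 - (2 * D) / 2 * G\<^sup>2 \<le> (B\<^sup>2 / (2 * D) + A) * X\<^sup>2 - (2 * D) / 4 * G\<^sup>2"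
      using D by (intro absorb_cross_term t G X) simp
    then have "npow G (p - 2) * (B * t + A * X\<^sup>2 - D * G\<^sup>2)
        \<le> npow G (p - 2) * ((B\<^sup>2 / (2 * D) + A) * X\<^sup>2 - D / 2 * G\<^sup>2)"
      by (intro mult_left_mono npow_nonneg) simp
    also have "\<dots> \<le> C * X powr p"
      by (rule absorb[OF G X])
    finally show ?thesis .
  qed
  with C show thesis
    by (rule that)
qed

lemma norm_scaleR_add_square:
  fixes A B :: "'a::real_inner"
  shows "(norm (c1 *\<^sub>R A + c2 *\<^sub>R B))\<^sup>2 = c1\<^sup>2 * (norm A)\<^sup>2 + 2 * c1 * c2 * (A \<bullet> B) + c2\<^sup>2 * (norm B)\<^sup>2"
  unfolding power2_norm_eq_inner
  by (simp add: inner_add_left inner_add_right inner_commute[of B A] algebra_simps power2_eq_square)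

lemma inner_scaleR_add_right:
  fixes A B :: "'a::real_inner"
  shows "A \<bullet> (d1 *\<^sub>R A + d2 *\<^sub>R B) = d1 * (norm A)\<^sup>2 + d2 * (A \<bullet> B)"
  by (simp add: inner_add_right power2_norm_eq_inner)

section \<open>The exponents and the pointwise estimate\<close>

locale singular_exponents =
  fixes p \<delta> \<beta> :: real
  assumes p_ge_2: "2 \<le> p" and \<delta>_ge_1: "1 \<le> \<delta>" and \<beta>_pos: "0 < \<beta>" and \<beta>_less_s_p: "\<beta> < s_p p \<delta>"
begin

definition \<alpha> :: real where "\<alpha> = \<beta> + (p - 2) / 2"

definition q :: real where "q = 2 * \<beta> + p - 1 + \<delta>"

definition \<theta> :: real where "\<theta> = q / (p - 1 + \<delta>)"

definition \<kappa> :: real where "\<kappa> = \<delta> * (2 * \<alpha> + 1) - (p - 1) * \<alpha>\<^sup>2"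

definition \<mu> :: real where "\<mu> = ((p - 1) * \<alpha>\<^sup>2 / (2 * \<alpha> + 1) + \<delta>) / 2"

lemma \<alpha>_pos: "0 < \<alpha>"
  using \<beta>_pos p_ge_2 by (simp add: \<alpha>_def add_pos_nonneg)

lemma q_eq: "q = 2 * \<alpha> + 1 + \<delta>"
  by (simp add: q_def \<alpha>_def field_simps)

lemma q_gt_2: "2 < q"
  using \<beta>_pos p_ge_2 \<delta>_ge_1 by (simp add: q_def)

lemma \<theta>_pos: "0 < \<theta>"
  using q_gt_2 p_ge_2 \<delta>_ge_1 by (simp add: \<theta>_def)

lemma Young_exponent: "0 < 2 * \<beta> / q" "2 * \<beta> / q < 1" "\<theta> * (1 - 2 * \<beta> / q) = 1"
proof -
  have q: "0 < q"
    using q_gt_2 by simp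
  show "0 < 2 * \<beta> / q"
    using \<beta>_pos q by simp
  have "2 * \<beta> < q"
    using p_ge_2 \<delta>_ge_1 by (simp add: q_def)
  then show "2 * \<beta> / q < 1"
    using q by simp
  have "1 - 2 * \<beta> / q = (p - 1 + \<delta>) / q"
    using q by (simp add: q_def field_simps)
  moreover have "0 < p - 1 + \<delta>"
    using p_ge_2 \<delta>_ge_1 by simp
  ultimately show "\<theta> * (1 - 2 * \<beta> / q) = 1"
    using q by (simp add: \<theta>_def)
qed

lemma \<kappa>_pos: "0 < \<kappa>"
proof (cases "p = 2")
  case True
  have \<alpha>: "\<alpha> = \<beta>"
    unfolding \<alpha>_def using True by simp
  have \<beta>: "\<beta> < \<delta> + sqrt (\<delta>\<^sup>2 + \<delta>)"
    using \<beta>_less_s_p True by (simp add: s_p_def)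
  have "\<delta> \<le> sqrt (\<delta>\<^sup>2 + \<delta>)"
    using \<delta>_ge_1 by (simp add: real_le_rsqrt)
  then have "\<bar>\<beta> - \<delta>\<bar> < sqrt (\<delta>\<^sup>2 + \<delta>)"
    using \<beta> \<beta>_pos by auto
  then have "(\<beta> - \<delta>)\<^sup>2 < (sqrt (\<delta>\<^sup>2 + \<delta>))\<^sup>2"
    by (metis abs_ge_zero power2_abs power_strict_mono zero_less_numeral)
  then have "(\<beta> - \<delta>)\<^sup>2 < \<delta>\<^sup>2 + \<delta>"
    using \<delta>_ge_1 by simp
  then show ?thesis
    unfolding \<kappa>_def \<alpha> using True by (simp add: power2_eq_square algebra_simps)
next
  case False
  then have p2: "2 < p"
    using p_ge_2 by simp
  define \<alpha>\<^sub>0 where "\<alpha>\<^sub>0 = 2 * \<delta> / (p - 1) - 1 / 2"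
  have "\<beta> < 2 * \<delta> / (p - 1) - (p - 1) / 2"
    using \<beta>_less_s_p False by (simp add: s_p_def)
  moreover have "(p - 1) / 2 = (p - 2) / 2 + 1 / 2"
    by (simp add: field_simps)
  ultimately have "\<alpha> < \<alpha>\<^sub>0"
    unfolding \<alpha>_def \<alpha>\<^sub>0_def by linarith
  then have "(p - 1) * \<alpha>\<^sup>2 \<le> (p - 1) * (\<alpha> * \<alpha>\<^sub>0)"
    using \<alpha>_pos p2 by (intro mult_left_mono) (auto simp: power2_eq_square)
  also have "\<dots> = \<alpha> * ((p - 1) * \<alpha>\<^sub>0)"
    by (simp add: mult_ac)
  also have "(p - 1) * \<alpha>\<^sub>0 = 2 * \<delta> - (p - 1) / 2"
    using p2 unfolding \<alpha>\<^sub>0_def by (simp add: field_simps)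
  finally have "(p - 1) * \<alpha>\<^sup>2 \<le> 2 * \<delta> * \<alpha> - \<alpha> * (p - 1) / 2"
    by (simp add: algebra_simps)
  moreover have "0 < \<alpha> * (p - 1) / 2"
    using \<alpha>_pos p2 by simp
  ultimately have "(p - 1) * \<alpha>\<^sup>2 < 2 * \<delta> * \<alpha> + \<delta>"
    using \<delta>_ge_1 by linarith
  then show ?thesis
    by (simp add: \<kappa>_def algebra_simps)
qed

lemma \<mu>_coefficients:
  shows "(p - 1) * \<alpha>\<^sup>2 - \<mu> * (2 * \<alpha> + 1) = - (\<kappa> / 2)"
    and "2 * \<mu> - 2 * \<delta> = - (\<kappa> / (2 * \<alpha> + 1))"
  using \<alpha>_pos by (simp_all add: \<mu>_def \<kappa>_def field_simps)

lemma test_function_coefficients: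
  fixes U s V :: real
  assumes U: "0 < U" and s: "0 < s"
  defines "Z \<equiv> U powr (-2 * \<alpha> - 2) * s powr q" and "T \<equiv> U / s" and "j \<equiv> V * (s / U) powr q"
  shows "(-\<alpha> * U powr (-\<alpha> - 1) * s powr (q / 2))\<^sup>2 = \<alpha>\<^sup>2 * Z"
    and "2 * (-\<alpha> * U powr (-\<alpha> - 1) * s powr (q / 2)) * (U powr (-\<alpha>) * ((q / 2) * s powr (q / 2 - 1)))
      = -\<alpha> * q * Z * T"
    and "(U powr (-\<alpha>) * ((q / 2) * s powr (q / 2 - 1)))\<^sup>2 = (q / 2)\<^sup>2 * Z * T\<^sup>2"
    and "-(2 * \<alpha> + 1) * U powr (-(2 * \<alpha> + 1) - 1) * s powr q = -(2 * \<alpha> + 1) * Z"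
    and "U powr (-(2 * \<alpha> + 1)) * (q * s powr (q - 1)) = q * Z * T"
    and "V * fnl' \<delta> \<delta> U * (U powr (-\<alpha>) * s powr (q / 2))\<^sup>2 = 2 * \<delta> * j"
    and "V * fnl \<delta> \<delta> U * (U powr (-(2 * \<alpha> + 1)) * s powr q) = -2 * j"
proof -
  have Ue: "\<And>a. U powr a = exp (a * ln U)" and se: "\<And>a. s powr a = exp (a * ln s)"
    using U s by (simp_all add: powr_def)
  have T: "T = exp (ln U - ln s)" and j: "j = V * exp (q * (ln s - ln U))"
    unfolding T_def j_def using U s by (simp_all add: exp_diff powr_def ln_div)
  show "(-\<alpha> * U powr (-\<alpha> - 1) * s powr (q / 2))\<^sup>2 = \<alpha>\<^sup>2 * Z"
    unfolding Z_def Ue se by (simp add: power2_eq_square mult_exp_exp algebra_simps)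
  show "2 * (-\<alpha> * U powr (-\<alpha> - 1) * s powr (q / 2)) * (U powr (-\<alpha>) * ((q / 2) * s powr (q / 2 - 1)))
      = -\<alpha> * q * Z * T"
    unfolding Z_def Ue se T by (simp add: mult_exp_exp algebra_simps)
  show "(U powr (-\<alpha>) * ((q / 2) * s powr (q / 2 - 1)))\<^sup>2 = (q / 2)\<^sup>2 * Z * T\<^sup>2"
    unfolding Z_def Ue se T by (simp add: power2_eq_square mult_exp_exp algebra_simps)
  show "-(2 * \<alpha> + 1) * U powr (-(2 * \<alpha> + 1) - 1) * s powr q = -(2 * \<alpha> + 1) * Z"
    unfolding Z_def Ue se by (simp add: mult_exp_exp algebra_simps)
  show "U powr (-(2 * \<alpha> + 1)) * (q * s powr (q - 1)) = q * Z * T"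
    unfolding Z_def Ue se T by (simp add: mult_exp_exp algebra_simps)
  show "V * fnl' \<delta> \<delta> U * (U powr (-\<alpha>) * s powr (q / 2))\<^sup>2 = 2 * \<delta> * j"
    unfolding j fnl'_def Ue se q_eq by (simp add: power2_eq_square mult_exp_exp algebra_simps)
  show "V * fnl \<delta> \<delta> U * (U powr (-(2 * \<alpha> + 1)) * s powr q) = -2 * j"
    unfolding j fnl_def Ue se q_eq by (simp add: mult_exp_exp algebra_simps)
qed

text \<open>The pointwise integrand of $(p-1)$ times the stability form at $u^{-\alpha}\psi^{q/2}$ plus
  $\mu$ times the weak formulation at $u^{-(2\alpha+1)}\psi^q$, in the variables $W = w$, $V = g$,
  $U = u$, $s = \psi$, $G = |\nabla u|$, $P = |\nabla\psi|$, $e = \nabla u\cdot\nabla\psi$.\<close>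
definition density :: "real \<Rightarrow> real \<Rightarrow> real \<Rightarrow> real \<Rightarrow> real \<Rightarrow> real \<Rightarrow> real \<Rightarrow> real" where
  "density W V U s G P e =
     W * (U powr (-2 * \<alpha> - 2) * s powr q) * (npow G (p - 2)
       * (q * (\<mu> - (p - 1) * \<alpha>) * (U / s * e) + (p - 1) * (q / 2)\<^sup>2 * (U / s * P)\<^sup>2 - \<kappa> / 2 * G\<^sup>2))
     - \<kappa> / (2 * \<alpha> + 1) * (V * (s / U) powr q)"

lemma combination_eq_density:
  fixes Du D\<psi> :: "'a::real_inner"
  assumes U: "0 < U" and s: "0 \<le> s"
  shows "(p - 1) * (W * npow (norm Du) (p - 2) * (norm ((-\<alpha> * U powr (-\<alpha> - 1) * s powr (q / 2)) *\<^sub>R Du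
              + (U powr (-\<alpha>) * ((q / 2) * s powr (q / 2 - 1))) *\<^sub>R D\<psi>))\<^sup>2)
      - V * fnl' \<delta> \<delta> U * (U powr (-\<alpha>) * s powr (q / 2))\<^sup>2
      + \<mu> * (W * npow (norm Du) (p - 2) * (Du \<bullet> ((-(2 * \<alpha> + 1) * U powr (-(2 * \<alpha> + 1) - 1) * s powr q) *\<^sub>R Du
              + (U powr (-(2 * \<alpha> + 1)) * (q * s powr (q - 1))) *\<^sub>R D\<psi>))
            - V * fnl \<delta> \<delta> U * (U powr (-(2 * \<alpha> + 1)) * s powr q))
    = density W V U s (norm Du) (norm D\<psi>) (Du \<bullet> D\<psi>)"
proof (cases "s = 0")
  case True
  then show ?thesis
    by (simp add: density_def)
next
  case False
  then have s: "0 < s"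
    using s by simp
  define Z where "Z = U powr (-2 * \<alpha> - 2) * s powr q"
  define T where "T = U / s"
  define N where "N = npow (norm Du) (p - 2)"
  note coefficients = test_function_coefficients[OF U s, folded Z_def T_def]
  have "(p - 1) * (W * N * (norm ((-\<alpha> * U powr (-\<alpha> - 1) * s powr (q / 2)) *\<^sub>R Du
              + (U powr (-\<alpha>) * ((q / 2) * s powr (q / 2 - 1))) *\<^sub>R D\<psi>))\<^sup>2)
      - V * fnl' \<delta> \<delta> U * (U powr (-\<alpha>) * s powr (q / 2))\<^sup>2
      + \<mu> * (W * N * (Du \<bullet> ((-(2 * \<alpha> + 1) * U powr (-(2 * \<alpha> + 1) - 1) * s powr q) *\<^sub>R Du
              + (U powr (-(2 * \<alpha> + 1)) * (q * s powr (q - 1))) *\<^sub>R D\<psi>))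
            - V * fnl \<delta> \<delta> U * (U powr (-(2 * \<alpha> + 1)) * s powr q))
    = W * Z * (N * (((p - 1) * \<alpha>\<^sup>2 - \<mu> * (2 * \<alpha> + 1)) * (norm Du)\<^sup>2
        + q * (\<mu> - (p - 1) * \<alpha>) * (T * (Du \<bullet> D\<psi>)) + (p - 1) * (q / 2)\<^sup>2 * (T * norm D\<psi>)\<^sup>2))
      + (2 * \<mu> - 2 * \<delta>) * (V * (s / U) powr q)"
    unfolding norm_scaleR_add_square inner_scaleR_add_right coefficients
    by (simp add: algebra_simps power2_eq_square)
  also have "\<dots> = density W V U s (norm Du) (norm D\<psi>) (Du \<bullet> D\<psi>)"
    unfolding density_def \<mu>_coefficients Z_def T_def N_def by (simp add: algebra_simps)
  finally show ?thesis
    unfolding N_def .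
qed

text \<open>The factorisation behind the last use of Young's inequality: the first factor is the
  zero-order term, the second is controlled by $\|g^{-1}\|_\infty$ and $\psi \le 1$.\<close>
lemma gradient_term_split:
  assumes V: "0 < V" and U: "0 < U" and s: "0 < s" and P: "0 \<le> P"
  shows "U powr (-2 * \<alpha> - 2) * s powr q * (U / s * P) powr p
    = (V * (s / U) powr q) powr (2 * \<beta> / q) * (V powr (-(2 * \<beta> / q)) * s powr (\<delta> - 1) * P powr p)"
proof -
  have q: "0 < q"
    using q_gt_2 by simp
  have "U powr (-2 * \<alpha> - 2) * s powr q * (U / s) powr p
      = exp ((-2 * \<alpha> - 2) * ln U + q * ln s + p * (ln U - ln s))"
    using U s by (simp add: powr_def ln_div mult_exp_exp)
  also have "\<dots> = exp (2 * \<beta> * (ln s - ln U) + (\<delta> - 1) * ln s)"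
    by (simp add: \<alpha>_def q_def field_simps)
  also have "\<dots> = (s / U) powr (2 * \<beta>) * s powr (\<delta> - 1)"
    using U s by (simp add: powr_def ln_div mult_exp_exp)
  finally have key: "U powr (-2 * \<alpha> - 2) * s powr q * (U / s) powr p
      = (s / U) powr (2 * \<beta>) * s powr (\<delta> - 1)" .
  have "(V * (s / U) powr q) powr (2 * \<beta> / q) = V powr (2 * \<beta> / q) * (s / U) powr (2 * \<beta>)"
    using V U s q by (simp add: powr_mult powr_powr)
  moreover have "V powr (2 * \<beta> / q) * V powr (-(2 * \<beta> / q)) = 1"
    using V by (simp add: powr_add[symmetric])
  moreover have "(U / s * P) powr p = (U / s) powr p * P powr p"
    using U s P by (intro powr_mult)
  ultimately show ?thesis
    using key by (simp add: mult_ac)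
qed

lemma gradient_term_bound:
  assumes M: "0 \<le> M" and \<epsilon>: "0 < \<epsilon>"
  obtains C where "0 \<le> C" "\<And>W V U s P. 0 < W \<Longrightarrow> 0 < V \<Longrightarrow> 1 / V \<le> M \<Longrightarrow> 0 < U \<Longrightarrow>
      0 < s \<Longrightarrow> s \<le> 1 \<Longrightarrow> 0 \<le> P \<Longrightarrow>
      W * (U powr (-2 * \<alpha> - 2) * s powr q) * (U / s * P) powr p
        \<le> \<epsilon> * (V * (s / U) powr q) + C * (W powr \<theta> * P powr (p * \<theta>))"
proof -
  define a where "a = 2 * \<beta> / q"
  note a = Young_exponent[folded a_def]
  obtain C where C: "0 \<le> C" and young: "\<And>x y. 0 \<le> x \<Longrightarrow> 0 \<le> y \<Longrightarrow>
      x powr a * y powr (1 - a) \<le> \<epsilon> * x + C * y"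
    using Youngs_inequality_eps[OF a(1,2) \<epsilon>] by blast
  show thesis
  proof (rule that[of "C * M powr (a * \<theta>)"])
    show "0 \<le> C * M powr (a * \<theta>)"
      using C by simp
    fix W V U s P :: real
    assume W: "0 < W" and V: "0 < V" and VM: "1 / V \<le> M" and U: "0 < U" and s: "0 < s"
      and s1: "s \<le> 1" and P: "0 \<le> P"
    define j where "j = V * (s / U) powr q"
    define Y where "Y = W * V powr (-a) * s powr (\<delta> - 1) * P powr p"
    have Y: "0 \<le> Y"
      using W by (simp add: Y_def)
    have "Y powr \<theta> = W powr \<theta> * (1 / V) powr (a * \<theta>) * s powr ((\<delta> - 1) * \<theta>) * P powr (p * \<theta>)"
      unfolding Y_def using V by (simp add: powr_mult powr_powr powr_divide powr_minus_divide)
    also have "\<dots> \<le> W powr \<theta> * M powr (a * \<theta>) * 1 * P powr (p * \<theta>)"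
    proof -
      have "(1 / V) powr (a * \<theta>) \<le> M powr (a * \<theta>)"
        using VM V a \<theta>_pos by (intro powr_mono2) auto
      moreover have "s powr ((\<delta> - 1) * \<theta>) \<le> 1"
        using powr_mono2[of "(\<delta> - 1) * \<theta>" s 1] s s1 \<delta>_ge_1 \<theta>_pos by simp
      ultimately show ?thesis
        by (intro mult_mono mult_right_mono) auto
    qed
    finally have Y_bound: "Y powr \<theta> \<le> M powr (a * \<theta>) * (W powr \<theta> * P powr (p * \<theta>))"
      by (simp add: mult_ac)
    have "W * (U powr (-2 * \<alpha> - 2) * s powr q) * (U / s * P) powr p = j powr a * (Y powr \<theta>) powr (1 - a)"
      using gradient_term_split[OF V U s P] a(3) Y
      by (simp add: j_def Y_def a_def powr_powr mult_ac)
    also have "\<dots> \<le> \<epsilon> * j + C * Y powr \<theta>"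
      using V by (intro young) (simp_all add: j_def)
    also have "\<dots> \<le> \<epsilon> * j + C * M powr (a * \<theta>) * (W powr \<theta> * P powr (p * \<theta>))"
      using Y_bound C by (simp add: mult_left_mono mult.assoc)
    finally show "W * (U powr (-2 * \<alpha> - 2) * s powr q) * (U / s * P) powr p
        \<le> \<epsilon> * (V * (s / U) powr q) + C * M powr (a * \<theta>) * (W powr \<theta> * P powr (p * \<theta>))"
      unfolding j_def .
  qed
qed

lemma density_bound:
  assumes M: "0 \<le> M"
  obtains \<epsilon> C where "0 < \<epsilon>" "0 < C"
    "\<And>W V U s G P e. 0 < W \<Longrightarrow> 0 < V \<Longrightarrow> 1 / V \<le> M \<Longrightarrow> 0 < U \<Longrightarrow> 0 \<le> s \<Longrightarrow> s \<le> 1 \<Longrightarrow>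
      0 \<le> G \<Longrightarrow> 0 \<le> P \<Longrightarrow> \<bar>e\<bar> \<le> G * P \<Longrightarrow>
      density W V U s G P e + \<epsilon> * (V * (s / U) powr q) \<le> C * (W powr \<theta> * P powr (p * \<theta>))"
proof -
  define B where "B = q * (\<mu> - (p - 1) * \<alpha>)"
  define A where "A = (p - 1) * (q / 2)\<^sup>2"
  have "0 < A"
    using p_ge_2 q_gt_2 by (simp add: A_def)
  then obtain C\<^sub>1 where C\<^sub>1: "0 \<le> C\<^sub>1" and gradient_terms: "\<And>G X t. 0 \<le> G \<Longrightarrow> 0 \<le> X \<Longrightarrow> \<bar>t\<bar> \<le> G * X \<Longrightarrow>
      npow G (p - 2) * (B * t + A * X\<^sup>2 - \<kappa> / 2 * G\<^sup>2) \<le> C\<^sub>1 * X powr p"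
    using npow_gradient_terms_le[OF p_ge_2, of "\<kappa> / 2" A B] \<kappa>_pos by (metis half_gt_zero)
  define \<epsilon> where "\<epsilon> = \<kappa> / (2 * (2 * \<alpha> + 1))"
  have \<epsilon>: "0 < \<epsilon>"
    using \<kappa>_pos \<alpha>_pos by (simp add: \<epsilon>_def)
  then obtain C\<^sub>2 where C\<^sub>2: "0 \<le> C\<^sub>2" and gradient_term: "\<And>W V U s P. 0 < W \<Longrightarrow> 0 < V \<Longrightarrow>
      1 / V \<le> M \<Longrightarrow> 0 < U \<Longrightarrow> 0 < s \<Longrightarrow> s \<le> 1 \<Longrightarrow> 0 \<le> P \<Longrightarrow>
      W * (U powr (-2 * \<alpha> - 2) * s powr q) * (U / s * P) powr p
        \<le> \<epsilon> / (C\<^sub>1 + 1) * (V * (s / U) powr q) + C\<^sub>2 * (W powr \<theta> * P powr (p * \<theta>))"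
    using gradient_term_bound[OF M, of "\<epsilon> / (C\<^sub>1 + 1)"] C\<^sub>1 by auto
  define C where "C = (C\<^sub>1 + 1) * C\<^sub>2 + 1"
  show thesis
  proof (rule that[OF \<epsilon>])
    show "0 < C"
      using C\<^sub>1 C\<^sub>2 by (simp add: C_def add_nonneg_pos)
    fix W V U s G P e :: real
    assume W: "0 < W" and V: "0 < V" and VM: "1 / V \<le> M" and U: "0 < U" and s0: "0 \<le> s"
      and s1: "s \<le> 1" and G: "0 \<le> G" and P: "0 \<le> P" and e: "\<bar>e\<bar> \<le> G * P"
    define Z where "Z = U powr (-2 * \<alpha> - 2) * s powr q"
    define X where "X = U / s * P"
    define j where "j = V * (s / U) powr q"
    define R where "R = W powr \<theta> * P powr (p * \<theta>)"
    show "density W V U s G P e + \<epsilon> * j \<le> C * R"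
    proof (cases "s = 0")
      case True
      then show ?thesis
        using C\<^sub>1 C\<^sub>2 by (simp add: density_def j_def R_def C_def)
    next
      case False
      then have s: "0 < s"
        using s0 by simp
      have WZ: "0 \<le> W * Z"
        using W by (simp add: Z_def)
      have "\<bar>U / s * e\<bar> \<le> G * X"
        using U s e by (simp add: X_def abs_mult divide_right_mono mult.left_commute)
      then have gradient_bound: "npow G (p - 2) * (B * (U / s * e) + A * X\<^sup>2 - \<kappa> / 2 * G\<^sup>2) \<le> C\<^sub>1 * X powr p"
        using G P U s by (intro gradient_terms) (simp_all add: X_def)
      have "\<kappa> / (2 * \<alpha> + 1) = 2 * \<epsilon>"
        using \<alpha>_pos by (simp add: \<epsilon>_def field_simps)
      then have "density W V U s G P e + \<epsilon> * j
          = W * Z * (npow G (p - 2) * (B * (U / s * e) + A * X\<^sup>2 - \<kappa> / 2 * G\<^sup>2)) - \<epsilon> * j"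
        unfolding density_def Z_def X_def j_def B_def A_def by simp
      also have "\<dots> \<le> W * Z * (C\<^sub>1 * X powr p) - \<epsilon> * j"
        using mult_left_mono[OF gradient_bound WZ] by simp
      also have "\<dots> = C\<^sub>1 * (W * Z * X powr p) - \<epsilon> * j"
        by (simp add: mult_ac)
      also have "\<dots> \<le> (C\<^sub>1 + 1) * (W * Z * X powr p) - \<epsilon> * j"
        using WZ by (simp add: distrib_right)
      also have "\<dots> \<le> (C\<^sub>1 + 1) * (\<epsilon> / (C\<^sub>1 + 1) * j + C\<^sub>2 * R) - \<epsilon> * j"
        using gradient_term[OF W V VM U s s1 P] C\<^sub>1
        by (simp add: Z_def X_def j_def R_def mult_left_mono)
      also have "\<dots> \<le> C * R"
        using C\<^sub>1 by (simp add: C_def R_def field_simps)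
      finally show ?thesis .
    qed
  qed
qed

lemma density_integral_nonneg:
  fixes w g u \<psi> :: "'a::euclidean_space \<Rightarrow> real"
  assumes w: "L1loc w" "AE x in lebesgue. 0 \<le> w x" and g: "L1loc g"
    and u: "C1 u" "\<forall>x. 0 < u x" and weak: "weak_solution p \<delta> \<delta> w g u" and stab: "stable p \<delta> \<delta> w g u"
    and \<psi>: "C1c \<psi>" "\<forall>x. 0 \<le> \<psi> x"
  defines "E \<equiv> \<lambda>x. density (w x) (g x) (u x) (\<psi> x) (norm (grad u x)) (norm (grad \<psi> x)) (grad u x \<bullet> grad \<psi> x)"
  shows "integrable lebesgue E" and "0 \<le> integral\<^sup>L lebesgue E"
proof -
  have q: "1 < q" "1 < q / 2"
    using q_gt_2 by simp_all
  define \<phi> where "\<phi> = (\<lambda>x. u x powr (-\<alpha>) * \<psi> x powr (q / 2))"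
  define \<eta> where "\<eta> = (\<lambda>x. u x powr (-(2 * \<alpha> + 1)) * \<psi> x powr q)"
  have \<phi>: "C1c \<phi>"
    unfolding \<phi>_def by (rule C1c_powr_mult_powr[OF u \<psi> q(2)])
  have \<eta>: "C1c \<eta>"
    unfolding \<eta>_def by (rule C1c_powr_mult_powr[OF u \<psi> q(1)])
  have "E = (\<lambda>x. (p - 1) * (w x * npow (norm (grad u x)) (p - 2) * (norm (grad \<phi> x))\<^sup>2)
      - g x * fnl' \<delta> \<delta> (u x) * (\<phi> x)\<^sup>2
      + \<mu> * (w x * npow (norm (grad u x)) (p - 2) * (grad u x \<bullet> grad \<eta> x) - g x * fnl \<delta> \<delta> (u x) * \<eta> x))"
    unfolding E_def \<phi>_def \<eta>_def grad_powr_mult_powr[OF u C1c_C1[OF \<psi>(1)] \<psi>(2) q(1)]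
      grad_powr_mult_powr[OF u C1c_C1[OF \<psi>(1)] \<psi>(2) q(2)]
    by (intro ext combination_eq_density[symmetric]) (use u \<psi> in auto)
  then show "integrable lebesgue E" and "0 \<le> integral\<^sup>L lebesgue E"
    using stable_weak_solution_combination[OF p_ge_2 w g u weak stab \<phi> \<eta>, where \<mu> = \<mu>] by simp_all
qed

lemma weighted_estimate:
  "\<exists>c>0. \<forall>(w::'a::euclidean_space \<Rightarrow> real) g u.
     L1loc w \<and> L1loc g \<and> (AE x in lebesgue. w x > 0) \<and> (AE x in lebesgue. g x > 0)
     \<and> Linf (\<lambda>x. 1 / g x) \<and> Linf_norm (\<lambda>x. 1 / g x) = m
     \<and> C1 u \<and> (\<forall>x. u x > 0) \<and> weak_solution p \<delta> \<delta> w g u \<and> stable p \<delta> \<delta> w g u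
     \<longrightarrow> (\<forall>\<psi>. C1c \<psi> \<and> (\<forall>x. 0 \<le> \<psi> x \<and> \<psi> x \<le> 1) \<longrightarrow>
           (\<integral>\<^sup>+ x. ennreal (g x * (\<psi> x / u x) powr (2 * \<beta> + p - 1 + \<delta>)) \<partial>lebesgue)
           \<le> ennreal c * (\<integral>\<^sup>+ x. ennreal (w x powr ((2 * \<beta> + p - 1 + \<delta>) / (p - 1 + \<delta>))
                * norm (grad \<psi> x) powr (p * ((2 * \<beta> + p - 1 + \<delta>) / (p - 1 + \<delta>)))) \<partial>lebesgue))"
proof -
  have "0 \<le> \<bar>m\<bar> + 1"
    by simp
  then obtain \<epsilon> C where \<epsilon>: "0 < \<epsilon>" and C: "0 < C" and bound: "\<And>W V U s G P e.
      0 < W \<Longrightarrow> 0 < V \<Longrightarrow> 1 / V \<le> \<bar>m\<bar> + 1 \<Longrightarrow> 0 < U \<Longrightarrow> 0 \<le> s \<Longrightarrow> s \<le> 1 \<Longrightarrow>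
      0 \<le> G \<Longrightarrow> 0 \<le> P \<Longrightarrow> \<bar>e\<bar> \<le> G * P \<Longrightarrow>
      density W V U s G P e + \<epsilon> * (V * (s / U) powr q) \<le> C * (W powr \<theta> * P powr (p * \<theta>))"
    using density_bound by blast
  show ?thesis
    unfolding q_def[symmetric] \<theta>_def[symmetric]
  proof (intro exI[of _ "C / \<epsilon>"] conjI allI impI; (elim conjE)?)
    show "0 < C / \<epsilon>"
      using \<epsilon> C by simp
    fix w g u \<psi> :: "'a \<Rightarrow> real"
    assume w: "L1loc w" and g: "L1loc g" and w_pos: "AE x in lebesgue. 0 < w x"
      and g_pos: "AE x in lebesgue. 0 < g x" and g_Linf: "Linf (\<lambda>x. 1 / g x)"
      and m: "Linf_norm (\<lambda>x. 1 / g x) = m" and u: "C1 u" and u_pos: "\<forall>x. 0 < u x"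
      and weak: "weak_solution p \<delta> \<delta> w g u" and stab: "stable p \<delta> \<delta> w g u"
      and \<psi>: "C1c \<psi>" and \<psi>_01: "\<forall>x. 0 \<le> \<psi> x \<and> \<psi> x \<le> 1"
    have w_nonneg: "AE x in lebesgue. 0 \<le> w x"
      using w_pos by (rule eventually_mono) simp
    have \<psi>_nonneg: "\<forall>x. 0 \<le> \<psi> x"
      using \<psi>_01 by simp
    note E = density_integral_nonneg[OF w w_nonneg g u u_pos weak stab \<psi> \<psi>_nonneg]
    have J: "integrable lebesgue (\<lambda>x. g x * (\<psi> x / u x) powr q)"
    proof (rule L1loc_integrable_mult[OF g])
      show "compact (closure {x. \<psi> x \<noteq> 0})"
        using \<psi> unfolding C1c_def by simp
      show "continuous_on UNIV (\<lambda>x. (\<psi> x / u x) powr q)"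
        using u_pos \<psi>_nonneg q_gt_2
        by (intro continuous_on_powr' continuous_intros C1_continuous_on u C1c_C1[OF \<psi>])
          (auto simp: less_imp_neq[symmetric] less_imp_le)
    qed (auto dest: notin_closure_support)
    have J_nonneg: "AE x in lebesgue. 0 \<le> g x * (\<psi> x / u x) powr q"
      using g_pos by (rule eventually_mono) simp
    have r: "(\<lambda>x. w x powr \<theta> * norm (grad \<psi> x) powr (p * \<theta>)) \<in> borel_measurable lebesgue"
      using L1loc_borel_measurable[OF w]
        continuous_on_borel_measurable_lebesgue[OF C1_continuous_on_grad[OF C1c_C1[OF \<psi>]]]
      by measurable
    have g_inv: "AE x in lebesgue. \<bar>1 / g x\<bar> \<le> \<bar>m\<bar> + 1"
      using Linf_AE_bound[OF g_Linf] m by simp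
    have pointwise: "AE x in lebesgue.
        density (w x) (g x) (u x) (\<psi> x) (norm (grad u x)) (norm (grad \<psi> x)) (grad u x \<bullet> grad \<psi> x)
          + \<epsilon> * (g x * (\<psi> x / u x) powr q)
        \<le> C * (w x powr \<theta> * norm (grad \<psi> x) powr (p * \<theta>))"
      using w_pos g_pos g_inv
    proof eventually_elim
      case (elim x)
      then show ?case
        using u_pos \<psi>_01 Cauchy_Schwarz_ineq2 by (intro bound) auto
    qed
    show "(\<integral>\<^sup>+x. ennreal (g x * (\<psi> x / u x) powr q) \<partial>lebesgue)
        \<le> ennreal (C / \<epsilon>) * (\<integral>\<^sup>+x. ennreal (w x powr \<theta> * norm (grad \<psi> x) powr (p * \<theta>)) \<partial>lebesgue)"
      by (rule nn_integral_le_by_absorption[OF E J J_nonneg r _ \<epsilon> _ pointwise]) (use C in simp_all)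
  qed
qed

end

theorem theorem3p1:
  fixes p \<delta> \<gamma> m :: real
  assumes "p \<ge> 2" and "\<delta> = \<gamma>" and "\<delta> \<ge> 1" and "class_Pa \<delta> p"
  shows "\<forall>\<beta>. 0 < \<beta> \<and> \<beta> < s_p p \<delta> \<longrightarrow>
    (\<exists>c>0. \<forall>(w::'a::euclidean_space \<Rightarrow> real) g u.
       L1loc w \<and> L1loc g \<and> (AE x in lebesgue. w x > 0) \<and> (AE x in lebesgue. g x > 0)
       \<and> Linf (\<lambda>x. 1 / g x) \<and> Linf_norm (\<lambda>x. 1 / g x) = m
       \<and> C1 u \<and> (\<forall>x. u x > 0) \<and> weak_solution p \<delta> \<gamma> w g u \<and> stable p \<delta> \<gamma> w g u
       \<longrightarrow> (\<forall>\<psi>. C1c \<psi> \<and> (\<forall>x. 0 \<le> \<psi> x \<and> \<psi> x \<le> 1) \<longrightarrow>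
             (\<integral>\<^sup>+ x. ennreal (g x * (\<psi> x / u x) powr (2 * \<beta> + p - 1 + \<delta>)) \<partial>lebesgue)
             \<le> ennreal c * (\<integral>\<^sup>+ x. ennreal (w x powr ((2 * \<beta> + p - 1 + \<delta>) / (p - 1 + \<delta>))
                  * norm (grad \<psi> x) powr (p * ((2 * \<beta> + p - 1 + \<delta>) / (p - 1 + \<delta>)))) \<partial>lebesgue)))"
  using assms(1,3) unfolding assms(2)[symmetric]
  by (intro allI impI singular_exponents.weighted_estimate singular_exponents.intro) auto

end
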